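(* Assume $\mathcal{T}$ is a tree. Fix $(i_0,j_0)\in\mathcal{E}$ such that $\mu_{i_0j_0}\ge\theta_{i_0}$. There is a constant $m_7$ such that for all measurable locally bounded functions $w_i,x_i$ ($i\in\mathcal{I}$) and $\psi_{ij}$ (with $\psi_{ij}=0$ for $i\not\sim j$) on $[0,\infty)$ satisfying, with $y(t):=(e\cdot x(t))^+e_{i_0}\in\mathbb{R}^I$ and $z(t):=(e\cdot x(t))^-e_{j_0}\in\mathbb{R}^J$, $$x_i(t)=w_i(t)-\sum_{j\in\mathcal{J}}\mu_{ij}\int_0^t\psi_{ij}(s)ds-\theta_i\int_0^ty_i(s)ds,\quad \sum_{j\in\mathcal{J}}\psi_{ij}=x_i-y_i\ (i\in\mathcal{I}),\quad \sum_{i\in\mathcal{I}}\psi_{ij}=-z_j\ (j\in\mathcal{J}),$$ we have $\|x(t)\|\le m_7(1+t)^{m_7}\|w\|_t^*$ for all $t\ge0$, where $m_7$ does not depend on $w$ and $t$.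
   Context: $\mathcal{I}=\{1,\dots,I\}$, $\mathcal{J}=\{I+1,\dots,I+J\}$, $\mathcal{E}\subset\mathcal{I}\times\mathcal{J}$, $i\sim j$ iff $(i,j)\in\mathcal{E}$; $\mathcal{T}$ is the bipartite graph with vertices $\mathcal{I}\cup\mathcal{J}$ and edges $\mathcal{E}$. Constants $\mu_{ij}>0$ for $(i,j)\in\mathcal{E}$, $\mu_{ij}=0$ otherwise, $\theta_i\ge0$. $e=(1,\dots,1)'$; $e_{i_0}$ (resp. $e_{j_0}$) denotes the coordinate unit vector in $\mathbb{R}^I$ (resp. $\mathbb{R}^J$, indexed by $\mathcal{J}$) for coordinate $i_0$ (resp. $j_0$); $a^\pm$ positive/negative parts. $\|x\|=\sum|x_i|$, $\|w\|_t^*=\sup_{s\le t}\|w(s)\|$. *)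

theory Defs
  imports "HOL-Analysis.Analysis"
begin

text \<open>Index sets: customer classes {1..nI}, server pools {nI+1..nI+nJ}.\<close>
definition Iset :: "nat \<Rightarrow> nat set" where "Iset nI = {1..nI}"
definition Jset :: "nat \<Rightarrow> nat \<Rightarrow> nat set" where "Jset nI nJ = {nI+1..nI+nJ}"

definition und_edges :: "(nat \<times> nat) set \<Rightarrow> (nat \<times> nat) set" where
  "und_edges E = E \<union> converse E"

text \<open>The graph on vertices {1..nI+nJ} with edges E is a tree: it is connected and
  acyclic, where acyclicity (for a simple graph) means that every edge is a bridge,
  i.e. removing it disconnects its endpoints.\<close>
definition is_tree :: "nat \<Rightarrow> nat \<Rightarrow> (nat \<times> nat) set \<Rightarrow> bool" where
  "is_tree nI nJ E \<longleftrightarrow>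
     E \<subseteq> Iset nI \<times> Jset nI nJ \<and>
     (\<forall>u\<in>Iset nI \<union> Jset nI nJ. \<forall>v\<in>Iset nI \<union> Jset nI nJ. (u, v) \<in> (und_edges E)\<^sup>*) \<and>
     (\<forall>(a, b)\<in>E. (a, b) \<notin> (und_edges (E - {(a, b)}))\<^sup>*)"

definition pospart :: "real \<Rightarrow> real" where "pospart a = max a 0"
definition negpart :: "real \<Rightarrow> real" where "negpart a = max (- a) 0"

definition meas_locbdd :: "(real \<Rightarrow> real) \<Rightarrow> bool" where
  "meas_locbdd f \<longleftrightarrow> f \<in> borel_measurable (restrict_space lborel {0..}) \<and>
     (\<forall>T\<ge>0. bounded (f ` {0..T}))"

definition supnorm :: "nat set \<Rightarrow> (nat \<Rightarrow> real \<Rightarrow> real) \<Rightarrow> real \<Rightarrow> real" where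
  "supnorm A w t = (SUP s\<in>{0..t}. (\<Sum>i\<in>A. \<bar>w i s\<bar>))"

end

theory Submission
  imports Defs
begin

text \<open>
  Removing an edge \<open>e \<noteq> (i\<^sub>0, j\<^sub>0)\<close> splits the tree into the component of \<open>i\<^sub>0\<close> and a
  far side \<open>D\<close>. Summing the balance equations over \<open>D\<close> shows that the flow \<open>\<psi>\<close> on \<open>e\<close> is,
  up to sign, the total \<open>X\<^sub>D\<close> of the classes in \<open>D\<close>. The equation for \<open>X\<^sub>D\<close> involves
  \<open>w\<close>, the integrated flows on edges strictly inside \<open>D\<close> (whose far sides are smaller, so
  they are bounded by induction on \<open>|D|\<close>), and possibly \<open>-\<mu>\<^sub>e \<integral> X\<^sub>D\<close>, which pushes \<open>X\<^sub>D\<close>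
  towards 0. A one-dimensional comparison lemma (if \<open>S = V + \<integral> h\<close> and \<open>h\<close> always has the
  sign opposite to \<open>S\<close>, then \<open>|S| \<le> 2 sup |V|\<close>) therefore gives \<open>|X\<^sub>D(t)|\<close> a polynomial
  bound in \<open>t\<close> times \<open>\<parallel>w\<parallel>\<^sup>*\<^sub>t\<close>. The same lemma applies to the total \<open>e\<cdot>x\<close>,
  whose drift \<open>\<mu>\<^sub>i\<^sub>0\<^sub>j\<^sub>0 (e\<cdot>x)\<^sup>- - \<theta>\<^sub>i\<^sub>0 (e\<cdot>x)\<^sup>+\<close> is restoring; this bounds the flow
  on \<open>(i\<^sub>0, j\<^sub>0)\<close> and finally each \<open>x\<^sub>i\<close> through its own equation.
\<close>

lemma meas_locbdd_iff:
  "meas_locbdd f \<longleftrightarrow> f \<in> borel_measurable (restrict_space lborel {0..}) \<and>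
     (\<forall>T\<ge>0. \<exists>B. \<forall>s\<in>{0..T}. \<bar>f s\<bar> \<le> B)"
  unfolding meas_locbdd_def bounded_iff by auto

lemma meas_locbdd_integrable:
  assumes f: "meas_locbdd f" and t: "0 \<le> t"
  shows "f integrable_on {0..t}" and "(LBINT s=0..t. f s) = integral {0..t} f"
proof -
  obtain B where B: "\<forall>s\<in>{0..t}. \<bar>f s\<bar> \<le> B"
    using f t unfolding meas_locbdd_iff by blast
  have "(\<lambda>s. indicator {0..} s *\<^sub>R f s) \<in> borel_measurable lborel"
    using f unfolding meas_locbdd_def by (subst (asm) borel_measurable_restrict_space_iff) auto
  moreover have "(\<lambda>s. indicator {0..t} s *\<^sub>R f s)
      = (\<lambda>s. indicator {0..t} s *\<^sub>R (indicator {0..} s *\<^sub>R f s))"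
    by (auto simp: indicator_def)
  ultimately have "(\<lambda>s. indicator {0..t} s *\<^sub>R f s) \<in> borel_measurable lborel"
    by simp
  then have "set_integrable lborel {0..t} f"
    unfolding set_integrable_def using B t
    by (intro integrableI_bounded_set[where A="{0..t}" and B=B]) auto
  then show "f integrable_on {0..t}" and "(LBINT s=0..t. f s) = integral {0..t} f"
    using set_borel_integral_eq_integral interval_integral_Icc[OF t, of f]
    by (simp_all add: zero_ereal_def)
qed

lemma meas_locbdd_sum:
  assumes "finite A" "\<And>k. k \<in> A \<Longrightarrow> meas_locbdd (f k)"
  shows "meas_locbdd (\<lambda>s. \<Sum>k\<in>A. f k s)"
  using assms
proof (induction A rule: finite_induct)
  case empty
  show ?case by (auto simp: meas_locbdd_iff)
next
  case (insert a A)
  have "meas_locbdd (f a)" and "meas_locbdd (\<lambda>s. \<Sum>k\<in>A. f k s)"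
    using insert by auto
  then show ?case
    unfolding sum.insert[OF insert(1,2)] meas_locbdd_def
    by (auto intro: bounded_plus_comp)
qed

lemma meas_locbdd_comp:
  assumes f: "meas_locbdd f" and g: "g \<in> borel_measurable borel" "\<And>a. \<bar>g a\<bar> \<le> \<bar>a\<bar>"
  shows "meas_locbdd (\<lambda>s. g (f s))"
  unfolding meas_locbdd_iff
proof safe
  show "(\<lambda>s. g (f s)) \<in> borel_measurable (restrict_space lborel {0..})"
    using f g(1) unfolding meas_locbdd_iff by (auto intro: measurable_compose)
  fix T :: real assume "0 \<le> T"
  then obtain B where "\<forall>s\<in>{0..T}. \<bar>f s\<bar> \<le> B" using f unfolding meas_locbdd_iff by meson
  then show "\<exists>B. \<forall>s\<in>{0..T}. \<bar>g (f s)\<bar> \<le> B"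
    using g(2) by (meson order_trans)
qed

lemma borel_measurable_pospart: "pospart \<in> borel_measurable borel"
  unfolding pospart_def[abs_def] by measurable

lemma borel_measurable_negpart: "negpart \<in> borel_measurable borel"
  unfolding negpart_def[abs_def] by measurable

lemma abs_pospart_le: "\<bar>pospart a\<bar> \<le> \<bar>a\<bar>"
  by (simp add: pospart_def)

lemma abs_negpart_le: "\<bar>negpart a\<bar> \<le> \<bar>a\<bar>"
  by (simp add: negpart_def)

lemma integral_abs_le_length_mult:
  fixes g :: "real \<Rightarrow> real"
  assumes "g integrable_on {0..s}" "0 \<le> s" "\<And>r. r \<in> {0..s} \<Longrightarrow> \<bar>g r\<bar> \<le> Q"
  shows "\<bar>integral {0..s} g\<bar> \<le> s * Q"
proof -
  have "norm (integral {0..s} g) \<le> integral {0..s} (\<lambda>_. Q)"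
    by (rule integral_norm_bound_integral) (use assms in auto)
  with assms(2) show ?thesis by simp
qed

section \<open>Restoring drift\<close>

lemma restoring_drift_integral_le:
  fixes S V h :: "real \<Rightarrow> real"
  assumes T: "0 \<le> T" and V: "\<And>s. s \<in> {0..T} \<Longrightarrow> \<bar>V s\<bar> \<le> M"
    and h: "h integrable_on {0..T}"
    and S: "\<And>s. s \<in> {0..T} \<Longrightarrow> S s = V s + integral {0..s} h"
    and drift: "\<And>r. r \<in> {0..T} \<Longrightarrow> 0 < S r \<Longrightarrow> h r \<le> 0"
  shows "integral {0..T} h \<le> M"
proof (rule ccontr)
  assume exceeds: "\<not> integral {0..T} h \<le> M"
  define U where "U s = integral {0..s} h" for s
  define A where "A = {0..T} \<inter> U -` {..M}"
  \<comment> \<open>After the last time \<open>\<tau>\<close> with \<open>U \<tau> \<le> M\<close>, \<open>U > M \<ge> \<bar>V\<bar>\<close> forces \<open>S > 0\<close>,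
    so \<open>U\<close> cannot increase.\<close>
  have "continuous_on {0..T} U"
    unfolding U_def by (rule indefinite_integral_continuous_1[OF h])
  then have "closed A"
    unfolding A_def by (rule continuous_closed_preimage) auto
  moreover have "0 \<in> A"
    using V[of 0] T unfolding A_def U_def by auto
  moreover have bdd: "bdd_above A"
    unfolding A_def by (auto intro: bdd_aboveI[of _ T])
  ultimately have "Sup A \<in> A"
    using closed_contains_Sup by blast
  define \<tau> where "\<tau> = Sup A"
  have \<tau>: "0 \<le> \<tau>" "\<tau> \<le> T" "U \<tau> \<le> M"
    using \<open>Sup A \<in> A\<close> unfolding \<tau>_def A_def by auto
  have drift_after: "h r \<le> 0" if r: "r \<in> {\<tau><..<T}" for r
  proof -
    have "r \<notin> A"
      using r bdd unfolding \<tau>_def by (meson cSup_upper greaterThanLessThan_iff not_le)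
    then have "U r > M"
      using r \<tau> unfolding A_def by auto
    then have "S r > 0"
      using S[of r] V[of r] r \<tau> unfolding U_def by auto
    then show ?thesis
      using drift r \<tau> by auto
  qed
  have "h integrable_on {\<tau>..T}"
    using \<tau> by (intro integrable_subinterval_real[OF h]) auto
  then have "h integrable_on {\<tau><..<T}"
    by (simp add: integrable_on_open_interval_real)
  then have "integral {\<tau><..<T} h \<le> integral {\<tau><..<T} (\<lambda>_. 0::real)"
    using drift_after by (rule integral_le[OF _ integrable_0])
  then have "integral {\<tau>..T} h \<le> 0"
    using integral_open_interval_real[of \<tau> T h] by simp
  moreover have "integral {0..\<tau>} h + integral {\<tau>..T} h = integral {0..T} h"
    using Henstock_Kurzweil_Integration.integral_combine[OF \<tau>(1,2) h] .
  ultimately show False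
    using exceeds \<tau>(3) unfolding U_def by simp
qed

lemma restoring_drift_abs_le:
  fixes S V h :: "real \<Rightarrow> real"
  assumes T: "0 \<le> T" and V: "\<And>s. s \<in> {0..T} \<Longrightarrow> \<bar>V s\<bar> \<le> M"
    and h: "h integrable_on {0..T}"
    and S: "\<And>s. s \<in> {0..T} \<Longrightarrow> S s = V s + integral {0..s} h"
    and drift: "\<And>r. r \<in> {0..T} \<Longrightarrow> S r * h r \<le> 0"
  shows "\<bar>S T\<bar> \<le> 2 * M"
proof -
  have "integral {0..T} h \<le> M"
  proof (rule restoring_drift_integral_le[OF T V h S])
    show "h r \<le> 0" if "r \<in> {0..T}" "0 < S r" for r
      using drift[OF that(1)] that(2) by (auto simp: mult_le_0_iff)
  qed
  moreover have "integral {0..T} (\<lambda>r. - h r) \<le> M"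
  proof (rule restoring_drift_integral_le[where S="\<lambda>r. - S r" and V="\<lambda>r. - V r"])
    show "(\<lambda>r. - h r) integrable_on {0..T}"
      using h by (rule integrable_neg)
    show "- S s = - V s + integral {0..s} (\<lambda>r. - h r)" if "s \<in> {0..T}" for s
      using S[OF that] by (simp add: integral_neg)
    show "- h r \<le> 0" if "r \<in> {0..T}" "0 < - S r" for r
      using drift[OF that(1)] that(2) by (auto simp: mult_le_0_iff)
  qed (use T V in auto)
  ultimately show ?thesis
    using S[of T] V[of T] T by (simp add: integral_neg)
qed

section \<open>Cutting a tree at an edge\<close>

lemma finite_Iset [simp]: "finite (Iset n)" and finite_Jset [simp]: "finite (Jset n m)"
  by (simp_all add: Iset_def Jset_def)

lemma sym_und_edges: "sym (und_edges E)"
  unfolding und_edges_def sym_def by auto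

lemma cut_flow_balance:
  fixes \<psi> :: "'a \<Rightarrow> 'a \<Rightarrow> real"
  assumes fin: "finite I" "finite J" and E: "E \<subseteq> I \<times> J" "(i, j) \<in> E"
    and off_edges: "\<And>k l. k \<in> I \<Longrightarrow> l \<in> J \<Longrightarrow> (k, l) \<notin> E \<Longrightarrow> \<psi> k l = 0"
    and cut: "\<And>k l. (k, l) \<in> E \<Longrightarrow> (k, l) \<noteq> (i, j) \<Longrightarrow> k \<in> D \<longleftrightarrow> l \<in> D"
  shows "(\<Sum>k\<in>D \<inter> I. \<Sum>l\<in>J. \<psi> k l) - (\<Sum>l\<in>D \<inter> J. \<Sum>k\<in>I. \<psi> k l)
         = (of_bool (i \<in> D) - of_bool (j \<in> D)) * \<psi> i j"
proof -
  define c where "c = (\<lambda>(k, l). (of_bool (k \<in> D) - of_bool (l \<in> D)) * \<psi> k l)"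
  have restrict: "(\<Sum>k\<in>D \<inter> A. g k) = (\<Sum>k\<in>A. of_bool (k \<in> D) * g k)"
    if "finite A" for A and g :: "'a \<Rightarrow> real"
    by (auto simp: Int_commute sum.inter_restrict[OF that] intro!: sum.cong)
  have "(\<Sum>k\<in>D \<inter> I. \<Sum>l\<in>J. \<psi> k l) - (\<Sum>l\<in>D \<inter> J. \<Sum>k\<in>I. \<psi> k l) = (\<Sum>p\<in>I \<times> J. c p)"
    unfolding restrict[OF fin(1)] restrict[OF fin(2)] c_def
    by (simp add: sum_distrib_left sum.swap[of _ I] sum_subtractf[symmetric] left_diff_distrib
        sum.cartesian_product case_prod_unfold)
  also have "\<dots> = c (i, j) + (\<Sum>p\<in>I \<times> J - {(i, j)}. c p)"
    using E fin by (subst sum.remove[of _ "(i, j)"]) auto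
  also have "(\<Sum>p\<in>I \<times> J - {(i, j)}. c p) = 0"
  proof (intro sum.neutral ballI)
    fix p assume "p \<in> I \<times> J - {(i, j)}"
    then obtain k l where "p = (k, l)" "k \<in> I" "l \<in> J" "(k, l) \<noteq> (i, j)"
      by auto
    then show "c p = 0"
      using off_edges[of k l] cut[of k l] by (cases "(k, l) \<in> E") (auto simp: c_def)
  qed
  finally show ?thesis
    unfolding c_def by simp
qed

lemma und_edges_path_avoids_or_reaches_edge:
  assumes "(u, v) \<in> (und_edges E)\<^sup>*"
  shows "(u, v) \<in> (und_edges (E - {(a, b)}))\<^sup>* \<or>
    (u, a) \<in> (und_edges (E - {(a, b)}))\<^sup>* \<or> (u, b) \<in> (und_edges (E - {(a, b)}))\<^sup>*"
  using assms
proof (induction rule: rtrancl_induct)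
  case (step y z)
  show ?case
  proof (cases "(y, z) \<in> und_edges (E - {(a, b)})")
    case True
    then show ?thesis
      using step.IH by (meson rtrancl.rtrancl_into_rtrancl)
  next
    case False
    then have "(y, z) = (a, b) \<or> (y, z) = (b, a)"
      using step.hyps(2) unfolding und_edges_def by auto
    then show ?thesis
      using step.IH by auto
  qed
qed simp

locale bipartite_tree =
  fixes nI nJ :: nat and E :: "(nat \<times> nat) set" and i0 j0 :: nat
  assumes tree: "is_tree nI nJ E" and root_edge: "(i0, j0) \<in> E"
begin

abbreviation "II \<equiv> Iset nI"
abbreviation "JJ \<equiv> Jset nI nJ"

definition root_side :: "nat \<times> nat \<Rightarrow> nat set" where
  "root_side e = {v. (i0, v) \<in> (und_edges (E - {e}))\<^sup>*}"

definition far_side :: "nat \<times> nat \<Rightarrow> nat set" where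
  "far_side e = (II \<union> JJ) - root_side e"

lemma edges_subset: "E \<subseteq> II \<times> JJ"
  using tree unfolding is_tree_def by auto

lemma vertices_connected: "u \<in> II \<union> JJ \<Longrightarrow> v \<in> II \<union> JJ \<Longrightarrow> (u, v) \<in> (und_edges E)\<^sup>*"
  using tree unfolding is_tree_def by blast

lemma edge_is_bridge: "(a, b) \<in> E \<Longrightarrow> (a, b) \<notin> (und_edges (E - {(a, b)}))\<^sup>*"
  using tree unfolding is_tree_def by blast

lemma i0_in_II: "i0 \<in> II" and j0_in_JJ: "j0 \<in> JJ"
  using root_edge edges_subset by auto

lemma finite_far_side: "finite (far_side e)"
  unfolding far_side_def by auto

lemma i0_notin_far_side: "i0 \<notin> far_side e"
  unfolding far_side_def root_side_def by auto

lemma far_side_one_end: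
  assumes ab: "(a, b) \<in> E"
  shows "a \<in> far_side (a, b) \<longleftrightarrow> b \<notin> far_side (a, b)"
proof -
  let ?F = "und_edges (E - {(a, b)})"
  have ends: "a \<in> II \<union> JJ" "b \<in> II \<union> JJ"
    using ab edges_subset by auto
  have "\<not> (a \<in> root_side (a, b) \<and> b \<in> root_side (a, b))"
  proof
    assume "a \<in> root_side (a, b) \<and> b \<in> root_side (a, b)"
    then have "(i0, a) \<in> ?F\<^sup>*" "(i0, b) \<in> ?F\<^sup>*"
      unfolding root_side_def by auto
    then have "(a, b) \<in> ?F\<^sup>*"
      using symD[OF sym_rtrancl[OF sym_und_edges]] by (meson rtrancl_trans)
    then show False
      using edge_is_bridge[OF ab] by contradiction
  qed
  moreover have "a \<in> root_side (a, b) \<or> b \<in> root_side (a, b)"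
    using und_edges_path_avoids_or_reaches_edge[OF vertices_connected[OF _ ends(1)], of i0 a b]
      i0_in_II unfolding root_side_def by blast
  ultimately show ?thesis
    using ends unfolding far_side_def by auto
qed

lemma far_side_closed:
  assumes "(k, l) \<in> E" "(k, l) \<noteq> e"
  shows "k \<in> far_side e \<longleftrightarrow> l \<in> far_side e"
proof -
  have "(k, l) \<in> und_edges (E - {e})" "(l, k) \<in> und_edges (E - {e})"
    using assms unfolding und_edges_def by auto
  then have "k \<in> root_side e \<longleftrightarrow> l \<in> root_side e"
    unfolding root_side_def by (auto intro: rtrancl_into_rtrancl)
  moreover have "k \<in> II \<union> JJ" "l \<in> II \<union> JJ"
    using assms edges_subset by auto
  ultimately show ?thesis
    unfolding far_side_def by auto
qed

lemma j0_notin_far_side: "e \<noteq> (i0, j0) \<Longrightarrow> j0 \<notin> far_side e"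
  by (metis far_side_closed root_edge i0_notin_far_side)

lemma j0_in_far_side_root_edge: "j0 \<in> far_side (i0, j0)"
  using far_side_one_end[OF root_edge] i0_notin_far_side by blast

lemma far_side_nonempty: "e \<in> E \<Longrightarrow> far_side e \<noteq> {}"
  using far_side_one_end by (cases e) blast

lemma far_side_card_less:
  assumes e: "e \<in> E" and kl: "(k, l) \<in> E" "k \<in> far_side e" "l \<in> far_side e"
  shows "card (far_side (k, l)) < card (far_side e)"
proof -
  have "root_side e \<subseteq> root_side (k, l)"
  proof
    fix v assume "v \<in> root_side e"
    then have "(i0, v) \<in> (und_edges (E - {e}))\<^sup>*"
      unfolding root_side_def by simp
    then show "v \<in> root_side (k, l)"
    proof (induction rule: rtrancl_induct)
      case base
      show ?case by (simp add: root_side_def)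
    next
      case (step u v)
      have "u \<in> root_side e"
        using step.hyps(1) unfolding root_side_def by simp
      moreover have "u \<in> II \<union> JJ"
        using step.hyps(2) edges_subset unfolding und_edges_def by blast
      ultimately have "u \<noteq> k" "u \<noteq> l"
        using kl unfolding far_side_def by auto
      then have "(u, v) \<in> und_edges (E - {(k, l)})"
        using step.hyps(2) unfolding und_edges_def by auto
      with step.IH show ?case
        unfolding root_side_def by (auto intro: rtrancl_into_rtrancl)
    qed
  qed
  then have "far_side (k, l) \<subseteq> far_side e"
    unfolding far_side_def by auto
  moreover have "far_side (k, l) \<noteq> far_side e"
    using far_side_one_end[OF kl(1)] kl by auto
  ultimately show ?thesis
    using finite_far_side by (meson psubsetI psubset_card_mono)
qed

lemma card_far_side_le: "card (far_side e) \<le> nI + nJ"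
proof -
  have "card (far_side e) \<le> card (II \<union> JJ)"
    unfolding far_side_def by (intro card_mono) auto
  also have "\<dots> \<le> nI + nJ"
    using card_Un_le[of II JJ] by (simp add: Iset_def Jset_def)
  finally show ?thesis .
qed

end

section \<open>Polynomial bounds for the network equations\<close>

lemma power_growth_mono:
  fixes K r t \<beta> \<gamma> :: real
  assumes "1 \<le> K" "c \<le> m" "0 \<le> r" "r \<le> t" "0 \<le> \<beta>" "\<beta> \<le> \<gamma>"
  shows "K ^ c * (1 + r) ^ c * \<beta> \<le> K ^ m * (1 + t) ^ m * \<gamma>"
proof -
  have "(1 + r) ^ c \<le> (1 + r) ^ m"
    using assms by (intro power_increasing) auto
  also have "\<dots> \<le> (1 + t) ^ m"
    using assms by (intro power_mono) auto
  moreover have "K ^ c \<le> K ^ m"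
    using assms by (intro power_increasing) auto
  ultimately have "K ^ c * (1 + r) ^ c \<le> K ^ m * (1 + t) ^ m"
    using assms by (intro mult_mono) auto
  then show ?thesis
    by (rule mult_mono) (use assms in auto)
qed

lemma far_side_step_arith:
  fixes \<mu> t \<beta> :: real
  assumes "0 \<le> \<mu>" "0 \<le> t" "0 \<le> \<beta>"
  shows "2 * (\<beta> + \<mu> * (t * ((2 * (1 + \<mu>)) ^ m * (1 + t) ^ m * \<beta>)))
           \<le> (2 * (1 + \<mu>)) ^ Suc m * (1 + t) ^ Suc m * \<beta>"
proof -
  define Q where "Q = (2 * (1 + \<mu>)) ^ m * (1 + t) ^ m * \<beta>"
  have "1 \<le> (2 * (1 + \<mu>)) ^ m" "1 \<le> (1 + t) ^ m"
    using assms by auto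
  then have "1 * 1 \<le> (2 * (1 + \<mu>)) ^ m * (1 + t) ^ m"
    by (intro mult_mono) auto
  then have "\<beta> \<le> Q" and "0 \<le> Q"
    using assms mult_right_mono[of 1 _ \<beta>] unfolding Q_def by auto
  have "\<mu> * (t * Q) \<le> \<mu> * ((1 + t) * Q)"
    using \<open>0 \<le> Q\<close> assms(1) by (intro mult_left_mono mult_right_mono) auto
  moreover have "Q \<le> (1 + t) * Q"
    using \<open>0 \<le> Q\<close> assms(2) by (simp add: distrib_right)
  ultimately have "2 * (\<beta> + \<mu> * (t * Q)) \<le> 2 * (1 + \<mu>) * (1 + t) * Q"
    using \<open>\<beta> \<le> Q\<close> by (simp add: distrib_left distrib_right)
  then show ?thesis
    unfolding Q_def by (simp add: mult_ac)
qed

lemma total_bound_arith: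
  fixes \<mu> \<theta> t \<beta> P :: real
  assumes "0 \<le> \<mu>" "0 \<le> \<theta>" "0 \<le> t" "0 \<le> \<beta>" "\<beta> \<le> P"
  shows "\<beta> + (\<mu> + \<theta>) * (t * (2 * (\<beta> + 2 * \<mu> * (t * P)) + P))
           \<le> (1 + (\<mu> + \<theta>) * (3 + 4 * \<mu>)) * (1 + t) ^ 2 * P"
proof -
  have "t * (2 * (\<beta> + 2 * \<mu> * (t * P)) + P) \<le> t * (3 * P + 4 * \<mu> * (t * P))"
    using assms by (intro mult_left_mono) auto
  also have "\<dots> \<le> (3 + 4 * \<mu>) * (1 + t) ^ 2 * P"
  proof -
    have "(3 + 4 * \<mu>) * (1 + t) ^ 2 - t * (3 + 4 * \<mu> * t)
        = 3 + 3 * t + 3 * t\<^sup>2 + 4 * \<mu> + 8 * \<mu> * t"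
      by (simp add: power2_eq_square algebra_simps)
    also have "\<dots> \<ge> 0"
      using assms by simp
    finally have "t * (3 + 4 * \<mu> * t) \<le> (3 + 4 * \<mu>) * (1 + t) ^ 2"
      by simp
    then have "t * (3 + 4 * \<mu> * t) * P \<le> (3 + 4 * \<mu>) * (1 + t) ^ 2 * P"
      using assms by (intro mult_right_mono) auto
    then show ?thesis
      by (simp add: algebra_simps)
  qed
  finally have "(\<mu> + \<theta>) * (t * (2 * (\<beta> + 2 * \<mu> * (t * P)) + P))
      \<le> (\<mu> + \<theta>) * ((3 + 4 * \<mu>) * (1 + t) ^ 2 * P)"
    using assms by (intro mult_left_mono) auto
  moreover have "\<beta> \<le> (1 + t) ^ 2 * P"
    using assms mult_right_mono[of 1 "(1 + t) ^ 2" P] by simp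
  ultimately show ?thesis
    by (simp add: algebra_simps)
qed

lemma mult_power_le_mult_powr:
  fixes C t \<beta> :: real
  assumes "0 \<le> C" "0 \<le> t" "0 \<le> \<beta>"
  shows "C * (1 + t) ^ n * \<beta> \<le> (C + real n) * (1 + t) powr (C + real n) * \<beta>"
proof -
  have "(1 + t) ^ n = (1 + t) powr real n"
    using assms by (simp add: powr_realpow)
  also have "\<dots> \<le> (1 + t) powr (C + real n)"
    using assms by (intro powr_mono) auto
  finally have "C * (1 + t) ^ n \<le> (C + real n) * (1 + t) powr (C + real n)"
    using assms by (intro mult_mono) auto
  then show ?thesis
    using assms(3) by (rule mult_right_mono)
qed

locale tree_network = bipartite_tree +
  fixes \<mu> :: "nat \<Rightarrow> nat \<Rightarrow> real" and \<theta> :: "nat \<Rightarrow> real"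
  assumes mu_pos: "\<And>i j. (i, j) \<in> E \<Longrightarrow> \<mu> i j > 0"
    and mu_zero: "\<And>i j. (i, j) \<notin> E \<Longrightarrow> \<mu> i j = 0"
    and theta_nonneg: "\<And>i. i \<in> Iset nI \<Longrightarrow> \<theta> i \<ge> 0"
begin

definition total_rate :: real where
  "total_rate = (\<Sum>(k, l)\<in>II \<times> JJ. \<mu> k l)"

\<comment> \<open>Each step of the induction over far sides multiplies the bound by \<open>growth_base * (1 + t)\<close>.\<close>
definition growth_base :: real where
  "growth_base = 2 * (1 + total_rate)"

definition growth_const :: real where
  "growth_const = growth_base ^ (nI + nJ) * (1 + (total_rate + \<theta> i0) * (3 + 4 * total_rate))"

definition growth_exponent :: real where
  "growth_exponent = growth_const + real (nI + nJ + 2)"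

lemma mu_nonneg: "0 \<le> \<mu> k l"
  using mu_pos[of k l] mu_zero[of k l] by (cases "(k, l) \<in> E") auto

lemma total_rate_nonneg: "0 \<le> total_rate"
  unfolding total_rate_def by (intro sum_nonneg) (auto simp: mu_nonneg)

lemma mu_le_total_rate: "k \<in> II \<Longrightarrow> l \<in> JJ \<Longrightarrow> \<mu> k l \<le> total_rate"
  unfolding total_rate_def
  by (rule member_le_sum[where i="(k, l)" and f="\<lambda>(k, l). \<mu> k l", simplified])
    (auto simp: mu_nonneg)

lemma growth_base_ge_1: "1 \<le> growth_base"
  using total_rate_nonneg unfolding growth_base_def by simp

lemma growth_const_nonneg: "0 \<le> growth_const"
  using growth_base_ge_1 total_rate_nonneg theta_nonneg[OF i0_in_II]
  unfolding growth_const_def by simp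

end

locale network_solution = tree_network +
  fixes w x :: "nat \<Rightarrow> real \<Rightarrow> real" and \<psi> :: "nat \<Rightarrow> nat \<Rightarrow> real \<Rightarrow> real"
  assumes regular: "\<forall>i\<in>Iset nI. meas_locbdd (w i) \<and> meas_locbdd (x i)"
    and psi_regular: "\<forall>i\<in>Iset nI. \<forall>j\<in>Jset nI nJ. meas_locbdd (\<psi> i j)"
    and psi_off_edges: "\<forall>i\<in>Iset nI. \<forall>j\<in>Jset nI nJ. (i, j) \<notin> E \<longrightarrow> (\<forall>t\<ge>0. \<psi> i j t = 0)"
    and dynamics: "\<forall>i\<in>Iset nI. \<forall>t\<ge>0.
      x i t = w i t - (\<Sum>j\<in>Jset nI nJ. \<mu> i j * (LBINT s=0..t. \<psi> i j s))
        - \<theta> i * (LBINT s=0..t. (if i = i0 then pospart (\<Sum>k\<in>Iset nI. x k s) else 0))"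
    and class_balance: "\<forall>i\<in>Iset nI. \<forall>t\<ge>0.
      (\<Sum>j\<in>Jset nI nJ. \<psi> i j t) = x i t - (if i = i0 then pospart (\<Sum>k\<in>Iset nI. x k t) else 0)"
    and pool_balance: "\<forall>j\<in>Jset nI nJ. \<forall>t\<ge>0.
      (\<Sum>i\<in>Iset nI. \<psi> i j t) = - (if j = j0 then negpart (\<Sum>k\<in>Iset nI. x k t) else 0)"
begin

definition class_total :: "nat set \<Rightarrow> real \<Rightarrow> real" where
  "class_total A t = (\<Sum>k\<in>A \<inter> II. x k t)"

definition wnorm :: "real \<Rightarrow> real" where
  "wnorm t = supnorm II w t"

fun cum_flow :: "nat \<times> nat \<Rightarrow> real \<Rightarrow> real" where
  "cum_flow (k, l) s = \<mu> k l * integral {0..s} (\<psi> k l)"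

lemma class_total_II: "class_total II t = (\<Sum>k\<in>II. x k t)"
  by (simp add: class_total_def)

lemma meas_locbdd_psi: "k \<in> II \<Longrightarrow> l \<in> JJ \<Longrightarrow> meas_locbdd (\<psi> k l)"
  using psi_regular by auto

lemma meas_locbdd_class_total: "meas_locbdd (class_total A)"
  unfolding class_total_def[abs_def] using regular by (intro meas_locbdd_sum) auto

lemma meas_locbdd_pospart_total: "meas_locbdd (\<lambda>s. pospart (class_total II s))"
  by (rule meas_locbdd_comp[OF meas_locbdd_class_total borel_measurable_pospart abs_pospart_le])

lemma meas_locbdd_negpart_total: "meas_locbdd (\<lambda>s. negpart (class_total II s))"
  by (rule meas_locbdd_comp[OF meas_locbdd_class_total borel_measurable_negpart abs_negpart_le])

lemma bdd_above_sum_abs_w: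
  assumes "0 \<le> t"
  shows "bdd_above ((\<lambda>s. \<Sum>k\<in>II. \<bar>w k s\<bar>) ` {0..t})"
proof -
  have "(\<lambda>a::real. \<bar>a\<bar>) \<in> borel_measurable borel"
    by measurable
  then have "meas_locbdd (\<lambda>s. \<bar>w k s\<bar>)" if "k \<in> II" for k
    using regular that by (intro meas_locbdd_comp[where g=abs]) auto
  then have "meas_locbdd (\<lambda>s. \<Sum>k\<in>II. \<bar>w k s\<bar>)"
    by (intro meas_locbdd_sum) auto
  then obtain C where "\<forall>s\<in>{0..t}. \<bar>\<Sum>k\<in>II. \<bar>w k s\<bar>\<bar> \<le> C"
    using assms unfolding meas_locbdd_iff by blast
  then show ?thesis
    by (intro bdd_aboveI[of _ C]) auto
qed

lemma sum_abs_w_le_wnorm: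
  assumes "0 \<le> s" "s \<le> t"
  shows "(\<Sum>k\<in>II. \<bar>w k s\<bar>) \<le> wnorm t"
  unfolding wnorm_def supnorm_def
  using assms bdd_above_sum_abs_w[of t] by (intro cSUP_upper) auto

lemma wnorm_nonneg: "0 \<le> t \<Longrightarrow> 0 \<le> wnorm t"
  using sum_abs_w_le_wnorm[of 0 t] by (meson order_trans sum_nonneg abs_ge_zero order_refl)

lemma wnorm_mono:
  assumes "0 \<le> s" "s \<le> t"
  shows "wnorm s \<le> wnorm t"
  unfolding wnorm_def supnorm_def
  using assms bdd_above_sum_abs_w[of t] by (intro cSUP_subset_mono) auto

lemma abs_sum_w_le_wnorm:
  assumes "0 \<le> s" "s \<le> t"
  shows "\<bar>\<Sum>k\<in>A \<inter> II. w k s\<bar> \<le> wnorm t"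
proof -
  have "\<bar>\<Sum>k\<in>A \<inter> II. w k s\<bar> \<le> (\<Sum>k\<in>A \<inter> II. \<bar>w k s\<bar>)"
    by (rule sum_abs)
  also have "\<dots> \<le> (\<Sum>k\<in>II. \<bar>w k s\<bar>)"
    by (rule sum_mono2) auto
  also have "\<dots> \<le> wnorm t"
    using assms by (rule sum_abs_w_le_wnorm)
  finally show ?thesis .
qed

lemma x_eq_cum_flow:
  assumes "k \<in> II" "0 \<le> t"
  shows "x k t = w k t - (\<Sum>l\<in>JJ. cum_flow (k, l) t)
    - (if k = i0 then \<theta> i0 * integral {0..t} (\<lambda>r. pospart (class_total II r)) else 0)"
  using dynamics assms meas_locbdd_integrable(2)[OF meas_locbdd_psi[OF assms(1)] assms(2)]
    meas_locbdd_integrable(2)[OF meas_locbdd_pospart_total assms(2)]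
  by (simp add: class_total_II)

lemma class_total_eq:
  assumes "0 \<le> t"
  shows "class_total A t = (\<Sum>k\<in>A \<inter> II. w k t) - (\<Sum>p\<in>(A \<inter> II) \<times> JJ. cum_flow p t)
    - (if i0 \<in> A then \<theta> i0 * integral {0..t} (\<lambda>r. pospart (class_total II r)) else 0)"
proof -
  have "class_total A t = (\<Sum>k\<in>A \<inter> II. w k t - (\<Sum>l\<in>JJ. cum_flow (k, l) t)
      - (if k = i0 then \<theta> i0 * integral {0..t} (\<lambda>r. pospart (class_total II r)) else 0))"
    unfolding class_total_def[of A] using assms by (intro sum.cong) (auto simp: x_eq_cum_flow)
  then show ?thesis
    using i0_in_II by (simp add: sum_subtractf sum.cartesian_product' sum.delta)
qed

lemma net_outflow_far_side:
  assumes e: "(a, b) \<in> E" and t: "0 \<le> t"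
  shows "(\<Sum>k\<in>far_side (a, b) \<inter> II. \<Sum>l\<in>JJ. \<psi> k l t)
      - (\<Sum>l\<in>far_side (a, b) \<inter> JJ. \<Sum>k\<in>II. \<psi> k l t)
    = (of_bool (a \<in> far_side (a, b)) - of_bool (b \<in> far_side (a, b))) * \<psi> a b t"
  by (rule cut_flow_balance[OF finite_Iset finite_Jset edges_subset e])
    (use psi_off_edges t far_side_closed in auto)

lemma far_side_total_eq_psi:
  assumes e: "(a, b) \<in> E" "(a, b) \<noteq> (i0, j0)" and t: "0 \<le> t"
  shows "class_total (far_side (a, b)) t
    = (of_bool (a \<in> far_side (a, b)) - of_bool (b \<in> far_side (a, b))) * \<psi> a b t"
proof -
  have "(\<Sum>k\<in>far_side (a, b) \<inter> II. \<Sum>l\<in>JJ. \<psi> k l t) = class_total (far_side (a, b)) t"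
    unfolding class_total_def using class_balance t i0_notin_far_side by (intro sum.cong) auto
  moreover have "(\<Sum>l\<in>far_side (a, b) \<inter> JJ. \<Sum>k\<in>II. \<psi> k l t) = 0"
    using pool_balance t j0_notin_far_side[OF e(2)] by (intro sum.neutral) auto
  ultimately show ?thesis
    using net_outflow_far_side[OF e(1) t] by simp
qed

lemma abs_psi_eq_far_side_total:
  assumes "(a, b) \<in> E" "(a, b) \<noteq> (i0, j0)" "0 \<le> t"
  shows "\<bar>\<psi> a b t\<bar> = \<bar>class_total (far_side (a, b)) t\<bar>"
  using far_side_total_eq_psi[OF assms] far_side_one_end[OF assms(1)]
  by (cases "a \<in> far_side (a, b)") auto

lemma psi_eq_far_side_total:
  assumes "(a, b) \<in> E" "a \<in> far_side (a, b)" "0 \<le> t"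
  shows "\<psi> a b t = class_total (far_side (a, b)) t"
proof -
  have "(a, b) \<noteq> (i0, j0)"
    using assms(2) i0_notin_far_side by auto
  then show ?thesis
    using far_side_total_eq_psi[OF assms(1) _ assms(3)] far_side_one_end[OF assms(1)] assms(2)
    by simp
qed

lemma psi_root_edge_eq:
  assumes t: "0 \<le> t"
  shows "\<psi> i0 j0 t = - negpart (class_total II t) - class_total (far_side (i0, j0)) t"
proof -
  have "(\<Sum>k\<in>far_side (i0, j0) \<inter> II. \<Sum>l\<in>JJ. \<psi> k l t) = class_total (far_side (i0, j0)) t"
    unfolding class_total_def[of "far_side (i0, j0)"]
    using class_balance t i0_notin_far_side by (intro sum.cong) auto
  moreover have "(\<Sum>l\<in>far_side (i0, j0) \<inter> JJ. \<Sum>k\<in>II. \<psi> k l t)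
      = (\<Sum>l\<in>far_side (i0, j0) \<inter> JJ. if l = j0 then - negpart (class_total II t) else 0)"
    using pool_balance t by (intro sum.cong) (auto simp: class_total_II)
  moreover have "\<dots> = - negpart (class_total II t)"
    using j0_in_far_side_root_edge j0_in_JJ finite_far_side by (simp add: sum.delta')
  ultimately show ?thesis
    using net_outflow_far_side[OF root_edge t] i0_notin_far_side j0_in_far_side_root_edge by simp
qed

lemma sum_abs_cum_flow_le:
  assumes A: "A \<subseteq> II \<times> JJ" and s: "0 \<le> s" "s \<le> t" and Q: "0 \<le> Q"
    and bound: "\<And>k l r. (k, l) \<in> A \<Longrightarrow> (k, l) \<in> E \<Longrightarrow> r \<in> {0..t} \<Longrightarrow> \<bar>\<psi> k l r\<bar> \<le> Q"
  shows "(\<Sum>p\<in>A. \<bar>cum_flow p s\<bar>) \<le> total_rate * (t * Q)"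
proof -
  have "\<bar>cum_flow (k, l) s\<bar> \<le> \<mu> k l * (t * Q)" if kl: "(k, l) \<in> A" for k l
  proof (cases "(k, l) \<in> E")
    case True
    have "\<bar>integral {0..s} (\<psi> k l)\<bar> \<le> s * Q"
      using kl A s True bound meas_locbdd_integrable(1)[OF meas_locbdd_psi]
      by (intro integral_abs_le_length_mult) auto
    also have "\<dots> \<le> t * Q"
      using s Q by (intro mult_right_mono) auto
    finally show ?thesis
      by (simp add: abs_mult mu_nonneg mult_left_mono)
  qed (simp add: mu_zero)
  then have "(\<Sum>p\<in>A. \<bar>cum_flow p s\<bar>) \<le> (\<Sum>(k, l)\<in>A. \<mu> k l * (t * Q))"
    by (intro sum_mono) auto
  also have "\<dots> \<le> (\<Sum>(k, l)\<in>II \<times> JJ. \<mu> k l * (t * Q))"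
    using A s Q by (intro sum_mono2) (auto simp: mu_nonneg)
  also have "\<dots> = total_rate * (t * Q)"
    unfolding total_rate_def by (simp add: sum_distrib_right case_prod_unfold)
  finally show ?thesis .
qed

definition far_side_perturbation :: "nat \<times> nat \<Rightarrow> real \<Rightarrow> real" where
  "far_side_perturbation e s =
    (\<Sum>k\<in>far_side e \<inter> II. w k s) - (\<Sum>p\<in>(far_side e \<inter> II) \<times> JJ - {e}. cum_flow p s)"

lemma far_side_total_eq:
  assumes e: "(a, b) \<in> E" and s: "0 \<le> s"
  shows "class_total (far_side (a, b)) s
    = far_side_perturbation (a, b) s - (if a \<in> far_side (a, b) then cum_flow (a, b) s else 0)"
proof -
  have "(\<Sum>p\<in>(far_side (a, b) \<inter> II) \<times> JJ. cum_flow p s)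
      = (\<Sum>p\<in>(far_side (a, b) \<inter> II) \<times> JJ - {(a, b)}. cum_flow p s)
        + (if a \<in> far_side (a, b) then cum_flow (a, b) s else 0)"
    using e edges_subset by (auto simp: sum.remove[of _ "(a, b)"])
  then show ?thesis
    using class_total_eq[OF s, of "far_side (a, b)"] i0_notin_far_side
    unfolding far_side_perturbation_def by simp
qed

lemma abs_far_side_perturbation_le:
  assumes s: "s \<in> {0..t}" and Q: "0 \<le> Q"
    and inner: "\<And>k l r. (k, l) \<in> E \<Longrightarrow> (k, l) \<noteq> e \<Longrightarrow> k \<in> far_side e \<Longrightarrow>
      r \<in> {0..t} \<Longrightarrow> \<bar>\<psi> k l r\<bar> \<le> Q"
  shows "\<bar>far_side_perturbation e s\<bar> \<le> wnorm t + total_rate * (t * Q)"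
proof -
  have "\<bar>\<Sum>p\<in>(far_side e \<inter> II) \<times> JJ - {e}. cum_flow p s\<bar>
      \<le> (\<Sum>p\<in>(far_side e \<inter> II) \<times> JJ - {e}. \<bar>cum_flow p s\<bar>)"
    by (rule sum_abs)
  also have "\<dots> \<le> total_rate * (t * Q)"
    using s Q inner by (intro sum_abs_cum_flow_le) auto
  finally show ?thesis
    using abs_sum_w_le_wnorm[of s t "far_side e"] s unfolding far_side_perturbation_def by auto
qed

lemma abs_far_side_total_step:
  assumes e: "(a, b) \<in> E" and t: "0 \<le> t" and Q: "0 \<le> Q"
    and inner: "\<And>k l r. (k, l) \<in> E \<Longrightarrow> (k, l) \<noteq> (a, b) \<Longrightarrow> k \<in> far_side (a, b) \<Longrightarrow>
      r \<in> {0..t} \<Longrightarrow> \<bar>\<psi> k l r\<bar> \<le> Q"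
  shows "\<bar>class_total (far_side (a, b)) t\<bar> \<le> 2 * (wnorm t + total_rate * (t * Q))"
proof -
  define D where "D = far_side (a, b)"
  have V_bound: "\<bar>far_side_perturbation (a, b) s\<bar> \<le> wnorm t + total_rate * (t * Q)"
    if "s \<in> {0..t}" for s
    using that Q inner by (rule abs_far_side_perturbation_le)
  show ?thesis
  proof (cases "a \<in> D")
    case False
    then show ?thesis
      using far_side_total_eq[OF e t] V_bound[of t] t unfolding D_def by simp
  next
    case True
    \<comment> \<open>The flow on \<open>(a, b)\<close> is the far-side total itself, so it enters with a restoring sign.\<close>
    have "\<bar>class_total D t\<bar> \<le> 2 * (wnorm t + total_rate * (t * Q))"
    proof (rule restoring_drift_abs_le[OF t V_bound])
      show "(\<lambda>r. - \<mu> a b * class_total D r) integrable_on {0..t}"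
        using meas_locbdd_integrable(1)[OF meas_locbdd_class_total t]
        by (intro integrable_neg integrable_on_mult_right)
      show "class_total D s
          = far_side_perturbation (a, b) s + integral {0..s} (\<lambda>r. - \<mu> a b * class_total D r)"
        if "s \<in> {0..t}" for s
      proof -
        have "integral {0..s} (\<psi> a b) = integral {0..s} (class_total D)"
          using psi_eq_far_side_total[OF e] True unfolding D_def by (intro integral_cong) auto
        then show ?thesis
          using far_side_total_eq[OF e, of s] that True unfolding D_def by (simp add: integral_neg)
      qed
      show "class_total D r * (- \<mu> a b * class_total D r) \<le> 0" for r
        using mu_nonneg[of a b] by (simp add: mult.left_commute[of _ "\<mu> a b"])
    qed
    then show ?thesis
      unfolding D_def .
  qed
qed

lemma abs_far_side_total_le:
  assumes "e \<in> E" "0 \<le> t"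
  shows "\<bar>class_total (far_side e) t\<bar>
    \<le> growth_base ^ card (far_side e) * (1 + t) ^ card (far_side e) * wnorm t"
  using assms
proof (induction "card (far_side e)" arbitrary: e t rule: less_induct)
  case less
  obtain a b where e: "e = (a, b)"
    by (cases e)
  obtain m where m: "card (far_side e) = Suc m"
    using far_side_nonempty[OF less.prems(1)] finite_far_side by (metis card_0_eq not0_implies_Suc)
  define Q where "Q = growth_base ^ m * (1 + t) ^ m * wnorm t"
  have "\<bar>\<psi> k l r\<bar> \<le> Q"
    if kl: "(k, l) \<in> E" "(k, l) \<noteq> (a, b)" "k \<in> far_side (a, b)" and r: "r \<in> {0..t}" for k l r
  proof -
    have "l \<in> far_side (a, b)"
      using far_side_closed[OF kl(1,2)] kl(3) by simp
    then have card_less: "card (far_side (k, l)) < Suc m"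
      using far_side_card_less[OF less.prems(1) kl(1)] kl(3) m e by simp
    have "(k, l) \<noteq> (i0, j0)"
      using kl(3) i0_notin_far_side by auto
    then have "\<bar>\<psi> k l r\<bar> = \<bar>class_total (far_side (k, l)) r\<bar>"
      using abs_psi_eq_far_side_total kl(1) r by auto
    also have "\<dots>
        \<le> growth_base ^ card (far_side (k, l)) * (1 + r) ^ card (far_side (k, l)) * wnorm r"
      using less.hyps card_less kl(1) r m by auto
    also have "\<dots> \<le> Q"
      unfolding Q_def using growth_base_ge_1 card_less r wnorm_nonneg wnorm_mono
      by (intro power_growth_mono) auto
    finally show ?thesis .
  qed
  moreover have "0 \<le> Q"
    unfolding Q_def using growth_base_ge_1 wnorm_nonneg less.prems(2) by simp
  ultimately have "\<bar>class_total (far_side e) t\<bar> \<le> 2 * (wnorm t + total_rate * (t * Q))"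
    using abs_far_side_total_step less.prems e by simp
  also have "\<dots> \<le> growth_base ^ Suc m * (1 + t) ^ Suc m * wnorm t"
    unfolding Q_def growth_base_def
    using total_rate_nonneg less.prems(2) wnorm_nonneg by (intro far_side_step_arith) auto
  finally show ?case
    unfolding m .
qed

definition edge_bound :: "real \<Rightarrow> real" where
  "edge_bound t = growth_base ^ (nI + nJ) * (1 + t) ^ (nI + nJ) * wnorm t"

lemma wnorm_le_edge_bound: "0 \<le> t \<Longrightarrow> wnorm t \<le> edge_bound t"
  using power_growth_mono[of growth_base 0 "nI + nJ" t t "wnorm t" "wnorm t"]
    growth_base_ge_1 wnorm_nonneg
  unfolding edge_bound_def by simp

lemma edge_bound_nonneg: "0 \<le> t \<Longrightarrow> 0 \<le> edge_bound t"
  using wnorm_le_edge_bound wnorm_nonneg by (meson order_trans)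

lemma abs_far_side_total_le_edge_bound:
  assumes "e \<in> E" "r \<in> {0..t}"
  shows "\<bar>class_total (far_side e) r\<bar> \<le> edge_bound t"
proof -
  have "\<bar>class_total (far_side e) r\<bar>
      \<le> growth_base ^ card (far_side e) * (1 + r) ^ card (far_side e) * wnorm r"
    using assms by (intro abs_far_side_total_le) auto
  also have "\<dots> \<le> edge_bound t"
    unfolding edge_bound_def using assms growth_base_ge_1 card_far_side_le wnorm_nonneg wnorm_mono
    by (intro power_growth_mono) auto
  finally show ?thesis .
qed

lemma abs_psi_le_edge_bound:
  assumes "(k, l) \<in> E" "(k, l) \<noteq> (i0, j0)" "r \<in> {0..t}"
  shows "\<bar>\<psi> k l r\<bar> \<le> edge_bound t"
  using abs_psi_eq_far_side_total[of k l r] abs_far_side_total_le_edge_bound[of "(k, l)" r t] assms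
  by auto

definition total_perturbation :: "real \<Rightarrow> real" where
  "total_perturbation s = (\<Sum>k\<in>II. w k s) - (\<Sum>p\<in>II \<times> JJ - {(i0, j0)}. cum_flow p s)
    + \<mu> i0 j0 * integral {0..s} (class_total (far_side (i0, j0)))"

definition total_drift :: "real \<Rightarrow> real" where
  "total_drift r = \<mu> i0 j0 * negpart (class_total II r) - \<theta> i0 * pospart (class_total II r)"

lemma total_eq_perturbation_plus_drift:
  assumes s: "0 \<le> s"
  shows "class_total II s = total_perturbation s + integral {0..s} total_drift"
proof -
  note integrable = meas_locbdd_integrable(1)[OF _ s]
  have "(\<Sum>p\<in>II \<times> JJ. cum_flow p s)
      = cum_flow (i0, j0) s + (\<Sum>p\<in>II \<times> JJ - {(i0, j0)}. cum_flow p s)"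
    using i0_in_II j0_in_JJ sum.remove[of "II \<times> JJ" "(i0, j0)" "\<lambda>p. cum_flow p s"] by simp
  moreover have "integral {0..s} (\<psi> i0 j0)
      = integral {0..s} (\<lambda>r. - negpart (class_total II r) - class_total (far_side (i0, j0)) r)"
    using psi_root_edge_eq by (intro integral_cong) auto
  moreover have "\<dots> = - integral {0..s} (\<lambda>r. negpart (class_total II r))
      - integral {0..s} (class_total (far_side (i0, j0)))"
    using integrable[OF meas_locbdd_negpart_total] integrable[OF meas_locbdd_class_total]
    by (simp add: integral_diff integral_neg integrable_neg)
  moreover have "integral {0..s} total_drift
      = \<mu> i0 j0 * integral {0..s} (\<lambda>r. negpart (class_total II r))
        - \<theta> i0 * integral {0..s} (\<lambda>r. pospart (class_total II r))"
    unfolding total_drift_def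
    using integrable[OF meas_locbdd_negpart_total] integrable[OF meas_locbdd_pospart_total]
    by (simp add: integral_diff integrable_on_mult_right)
  ultimately show ?thesis
    using class_total_eq[OF s, of II] i0_in_II unfolding total_perturbation_def
    by (simp add: algebra_simps)
qed

lemma abs_total_perturbation_le:
  assumes s: "s \<in> {0..t}"
  shows "\<bar>total_perturbation s\<bar> \<le> wnorm t + 2 * total_rate * (t * edge_bound t)"
proof -
  have P: "0 \<le> edge_bound t"
    using s by (intro edge_bound_nonneg) auto
  have "\<bar>\<Sum>k\<in>II. w k s\<bar> \<le> wnorm t"
    using abs_sum_w_le_wnorm[of s t II] s by simp
  moreover have "\<bar>\<Sum>p\<in>II \<times> JJ - {(i0, j0)}. cum_flow p s\<bar> \<le> total_rate * (t * edge_bound t)"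
  proof -
    have "\<bar>\<Sum>p\<in>II \<times> JJ - {(i0, j0)}. cum_flow p s\<bar> \<le> (\<Sum>p\<in>II \<times> JJ - {(i0, j0)}. \<bar>cum_flow p s\<bar>)"
      by (rule sum_abs)
    also have "\<dots> \<le> total_rate * (t * edge_bound t)"
      using s P abs_psi_le_edge_bound by (intro sum_abs_cum_flow_le) auto
    finally show ?thesis .
  qed
  moreover have "\<bar>\<mu> i0 j0 * integral {0..s} (class_total (far_side (i0, j0)))\<bar>
      \<le> total_rate * (t * edge_bound t)"
  proof -
    have "\<bar>integral {0..s} (class_total (far_side (i0, j0)))\<bar> \<le> s * edge_bound t"
      using s abs_far_side_total_le_edge_bound[OF root_edge]
        meas_locbdd_integrable(1)[OF meas_locbdd_class_total]
      by (intro integral_abs_le_length_mult) auto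
    also have "\<dots> \<le> t * edge_bound t"
      using s P by (intro mult_right_mono) auto
    finally show ?thesis
      using mu_nonneg mu_le_total_rate[OF i0_in_II j0_in_JJ] P s
      by (simp add: abs_mult mult_mono')
  qed
  ultimately show ?thesis
    unfolding total_perturbation_def by linarith
qed

lemma total_drift_restoring: "class_total II r * total_drift r \<le> 0"
  using mu_nonneg[of i0 j0] theta_nonneg[OF i0_in_II]
  unfolding total_drift_def pospart_def negpart_def
  by (cases "class_total II r \<ge> 0") (auto simp: mult_nonneg_nonpos mult_nonpos_nonpos)

definition total_bound :: "real \<Rightarrow> real" where
  "total_bound t = 2 * (wnorm t + 2 * total_rate * (t * edge_bound t))"

lemma abs_total_le:
  assumes "r \<in> {0..t}"
  shows "\<bar>class_total II r\<bar> \<le> total_bound t"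
  unfolding total_bound_def
proof (rule restoring_drift_abs_le[where S="class_total II" and T=r])
  show "0 \<le> r"
    using assms by simp
  show "\<bar>total_perturbation s\<bar> \<le> wnorm t + 2 * total_rate * (t * edge_bound t)"
    if "s \<in> {0..r}" for s
    using that assms by (intro abs_total_perturbation_le) auto
  show "total_drift integrable_on {0..r}"
    unfolding total_drift_def[abs_def] using assms
    by (intro integrable_diff integrable_on_mult_right meas_locbdd_integrable(1)
        meas_locbdd_negpart_total meas_locbdd_pospart_total) auto
  show "class_total II s = total_perturbation s + integral {0..s} total_drift"
    if "s \<in> {0..r}" for s
    using that by (intro total_eq_perturbation_plus_drift) auto
  show "class_total II s * total_drift s \<le> 0" for s
    by (rule total_drift_restoring)
qed

lemma abs_psi_le_total_bound:
  assumes kl: "k \<in> II" "l \<in> JJ" and r: "r \<in> {0..t}"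
  shows "\<bar>\<psi> k l r\<bar> \<le> total_bound t + edge_bound t"
proof -
  have P: "0 \<le> edge_bound t"
    using r by (intro edge_bound_nonneg) auto
  have S: "\<bar>class_total II r\<bar> \<le> total_bound t"
    using r by (rule abs_total_le)
  consider "(k, l) \<notin> E" | "(k, l) = (i0, j0)" | "(k, l) \<in> E" "(k, l) \<noteq> (i0, j0)"
    by blast
  then show ?thesis
  proof cases
    case 1
    then show ?thesis
      using psi_off_edges kl r P S by auto
  next
    case 2
    then have "\<bar>\<psi> k l r\<bar> \<le> \<bar>class_total II r\<bar> + \<bar>class_total (far_side (i0, j0)) r\<bar>"
      using psi_root_edge_eq r abs_negpart_le[of "class_total II r"] by auto
    then show ?thesis
      using S abs_far_side_total_le_edge_bound[OF root_edge r] by linarith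
  next
    case 3
    then show ?thesis
      using abs_psi_le_edge_bound[OF 3 r] S by linarith
  qed
qed

lemma sum_abs_x_le_sum_abs_cum_flow:
  assumes t: "0 \<le> t"
  defines "Y \<equiv> integral {0..t} (\<lambda>r. pospart (class_total II r))"
  shows "(\<Sum>k\<in>II. \<bar>x k t\<bar>) \<le> (\<Sum>k\<in>II. \<bar>w k t\<bar>) + (\<Sum>p\<in>II \<times> JJ. \<bar>cum_flow p t\<bar>) + \<theta> i0 * \<bar>Y\<bar>"
proof -
  have "\<bar>x k t\<bar>
      \<le> \<bar>w k t\<bar> + (\<Sum>l\<in>JJ. \<bar>cum_flow (k, l) t\<bar>) + (if k = i0 then \<theta> i0 * \<bar>Y\<bar> else 0)"
    if k: "k \<in> II" for k
  proof -
    have "\<bar>x k t\<bar>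
        \<le> \<bar>w k t\<bar> + \<bar>\<Sum>l\<in>JJ. cum_flow (k, l) t\<bar> + \<bar>if k = i0 then \<theta> i0 * Y else 0\<bar>"
      using x_eq_cum_flow[OF k t, folded Y_def] by arith
    moreover have "\<bar>\<Sum>l\<in>JJ. cum_flow (k, l) t\<bar> \<le> (\<Sum>l\<in>JJ. \<bar>cum_flow (k, l) t\<bar>)"
      by (rule sum_abs)
    moreover have "\<bar>if k = i0 then \<theta> i0 * Y else 0\<bar> = (if k = i0 then \<theta> i0 * \<bar>Y\<bar> else 0)"
      using theta_nonneg[OF i0_in_II] by (simp add: abs_mult)
    ultimately show ?thesis
      by linarith
  qed
  then have "(\<Sum>k\<in>II. \<bar>x k t\<bar>)
      \<le> (\<Sum>k\<in>II. \<bar>w k t\<bar> + (\<Sum>l\<in>JJ. \<bar>cum_flow (k, l) t\<bar>) + (if k = i0 then \<theta> i0 * \<bar>Y\<bar> else 0))"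
    by (rule sum_mono)
  also have "\<dots> = (\<Sum>k\<in>II. \<bar>w k t\<bar>) + (\<Sum>p\<in>II \<times> JJ. \<bar>cum_flow p t\<bar>) + \<theta> i0 * \<bar>Y\<bar>"
    using i0_in_II by (simp add: sum.distrib sum.cartesian_product' sum.delta)
  finally show ?thesis .
qed

lemma sum_abs_x_le:
  assumes t: "0 \<le> t"
  shows "(\<Sum>k\<in>II. \<bar>x k t\<bar>) \<le> wnorm t + (total_rate + \<theta> i0) * (t * (total_bound t + edge_bound t))"
proof -
  define G where "G = total_bound t + edge_bound t"
  have "\<bar>\<psi> i0 j0 0\<bar> \<le> G"
    using t unfolding G_def by (intro abs_psi_le_total_bound i0_in_II j0_in_JJ) auto
  then have G: "0 \<le> G"
    by (meson abs_ge_zero order_trans)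
  have "\<bar>integral {0..t} (\<lambda>r. pospart (class_total II r))\<bar> \<le> t * G"
    using meas_locbdd_integrable(1)[OF meas_locbdd_pospart_total t] t
  proof (rule integral_abs_le_length_mult)
    fix r assume r: "r \<in> {0..t}"
    have "\<bar>pospart (class_total II r)\<bar> \<le> \<bar>class_total II r\<bar>"
      by (rule abs_pospart_le)
    also have "\<dots> \<le> G"
      using abs_total_le[OF r] wnorm_le_edge_bound[OF t] wnorm_nonneg[OF t]
      unfolding G_def by linarith
    finally show "\<bar>pospart (class_total II r)\<bar> \<le> G" .
  qed
  then have "\<theta> i0 * \<bar>integral {0..t} (\<lambda>r. pospart (class_total II r))\<bar> \<le> \<theta> i0 * (t * G)"
    using theta_nonneg[OF i0_in_II] by (rule mult_left_mono)
  moreover have "(\<Sum>p\<in>II \<times> JJ. \<bar>cum_flow p t\<bar>) \<le> total_rate * (t * G)"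
    using t G abs_psi_le_total_bound by (intro sum_abs_cum_flow_le) (auto simp: G_def)
  ultimately have "(\<Sum>k\<in>II. \<bar>x k t\<bar>) \<le> wnorm t + total_rate * (t * G) + \<theta> i0 * (t * G)"
    using sum_abs_x_le_sum_abs_cum_flow[OF t] sum_abs_w_le_wnorm[OF t order_refl] by linarith
  then show ?thesis
    unfolding G_def by (simp add: algebra_simps)
qed

lemma sum_abs_x_le_powr:
  assumes t: "0 \<le> t"
  shows "(\<Sum>k\<in>II. \<bar>x k t\<bar>) \<le> growth_exponent * (1 + t) powr growth_exponent * wnorm t"
proof -
  have "(\<Sum>k\<in>II. \<bar>x k t\<bar>)
      \<le> (1 + (total_rate + \<theta> i0) * (3 + 4 * total_rate)) * (1 + t) ^ 2 * edge_bound t"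
    using sum_abs_x_le[OF t] total_bound_arith[OF total_rate_nonneg theta_nonneg[OF i0_in_II] t
        wnorm_nonneg[OF t] wnorm_le_edge_bound[OF t]]
    unfolding total_bound_def by linarith
  also have "\<dots> = growth_const * (1 + t) ^ (nI + nJ + 2) * wnorm t"
    unfolding growth_const_def edge_bound_def by (simp add: power_add power2_eq_square mult_ac)
  also have "\<dots> \<le> growth_exponent * (1 + t) powr growth_exponent * wnorm t"
    unfolding growth_exponent_def
    using growth_const_nonneg t wnorm_nonneg[OF t] by (rule mult_power_le_mult_powr)
  finally show ?thesis .
qed

end

theorem proposition3:
  fixes nI nJ :: nat and E :: "(nat \<times> nat) set"
    and \<mu> :: "nat \<Rightarrow> nat \<Rightarrow> real" and \<theta> :: "nat \<Rightarrow> real"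
    and i0 j0 :: nat
  assumes tree: "is_tree nI nJ E"
    and mu_pos: "\<And>i j. (i, j) \<in> E \<Longrightarrow> \<mu> i j > 0"
    and mu_zero: "\<And>i j. (i, j) \<notin> E \<Longrightarrow> \<mu> i j = 0"
    and theta_nonneg: "\<And>i. i \<in> Iset nI \<Longrightarrow> \<theta> i \<ge> 0"
    and edge0: "(i0, j0) \<in> E"
    and mu_ge: "\<mu> i0 j0 \<ge> \<theta> i0"
  shows "\<exists>m7::real. \<forall>(w :: nat \<Rightarrow> real \<Rightarrow> real) (x :: nat \<Rightarrow> real \<Rightarrow> real)
            (\<psi> :: nat \<Rightarrow> nat \<Rightarrow> real \<Rightarrow> real).
     let y = (\<lambda>i t. if i = i0 then pospart (\<Sum>k\<in>Iset nI. x k t) else 0);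
         z = (\<lambda>j t. if j = j0 then negpart (\<Sum>k\<in>Iset nI. x k t) else 0)
     in
     ((\<forall>i\<in>Iset nI. meas_locbdd (w i) \<and> meas_locbdd (x i)) \<and>
      (\<forall>i\<in>Iset nI. \<forall>j\<in>Jset nI nJ. meas_locbdd (\<psi> i j)) \<and>
      (\<forall>i\<in>Iset nI. \<forall>j\<in>Jset nI nJ. (i, j) \<notin> E \<longrightarrow> (\<forall>t\<ge>0. \<psi> i j t = 0)) \<and>
      (\<forall>i\<in>Iset nI. \<forall>t\<ge>0.
          x i t = w i t - (\<Sum>j\<in>Jset nI nJ. \<mu> i j * (LBINT s=0..t. \<psi> i j s))
                  - \<theta> i * (LBINT s=0..t. y i s)) \<and>
      (\<forall>i\<in>Iset nI. \<forall>t\<ge>0. (\<Sum>j\<in>Jset nI nJ. \<psi> i j t) = x i t - y i t) \<and>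
      (\<forall>j\<in>Jset nI nJ. \<forall>t\<ge>0. (\<Sum>i\<in>Iset nI. \<psi> i j t) = - z j t))
     \<longrightarrow> (\<forall>t\<ge>0. (\<Sum>i\<in>Iset nI. \<bar>x i t\<bar>) \<le> m7 * (1 + t) powr m7 * supnorm (Iset nI) w t)"
proof -
  interpret tree_network nI nJ E i0 j0 \<mu> \<theta>
    using tree mu_pos mu_zero theta_nonneg edge0 by unfold_locales auto
  have bound: "\<forall>t\<ge>0. (\<Sum>i\<in>II. \<bar>x i t\<bar>)
      \<le> growth_exponent * (1 + t) powr growth_exponent * supnorm II w t"
    if "network_solution_axioms nI nJ E i0 j0 \<mu> \<theta> w x \<psi>" for w x \<psi>
  proof -
    interpret network_solution nI nJ E i0 j0 \<mu> \<theta> w x \<psi>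
      using that by intro_locales
    show ?thesis
      using sum_abs_x_le_powr unfolding wnorm_def by blast
  qed
  show ?thesis
    using bound unfolding Let_def network_solution_axioms_def
    by (intro exI[of _ growth_exponent]) blast
qed

end
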